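(* Let $d\ge2$, $\tau\in(0,1)$, and let $f_0$ be a bounded probability density on $\mathbb{R}^d$ with two bounded continuous partial derivatives on $\mathbb{R}^d$, such that for some $a>0$ the set $U_a:=\{f_{\tau,0}-a\le f_0\le f_{\tau,0}+a\}$ satisfies $\inf_{U_a}\|\nabla f_0\|>0$ and $U_a\subset\beta_\tau^\delta$ for some $\delta>0$, and $\beta_\tau$ is compact. Let $\tilde f$ be another uniformly continuous probability density on $\mathbb{R}^d$ and $\tilde f_\tau:=f_\tau(\tilde f)$. Then there exists a constant $C_1\ge1$ such that for all $\varepsilon>0$ sufficiently small, $|\tilde f_\tau-f_{\tau,0}|\le C_1\varepsilon$ whenever $\|\tilde f-f_0\|_\infty\le\varepsilon$.
   Context: For a density $f$ on $\mathbb{R}^d$, $f_\tau(f):=\inf\{y\ge0:\int f(\boldsymbol x)\mathbf 1_{\{f(\boldsymbol x)\ge y\}}d\boldsymbol x\le1-\tau\}$, and $f_{\tau,0}:=f_\tau(f_0)$; $\beta_\tau:=\{\boldsymbol x:f_0(\boldsymbol x)=f_{\tau,0}\}$; $A^\delta:=\bigcup_{\boldsymbol x\in A}\{\boldsymbol y:\|\boldsymbol y-\boldsymbol x\|\le\delta\}$; $\|\cdot\|_\infty$ is the sup norm. *)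

theory Defs
  imports "HOL-Analysis.Analysis"
begin

definition prob_density :: "('a::euclidean_space \<Rightarrow> real) \<Rightarrow> bool" where
  "prob_density f \<longleftrightarrow> f \<in> borel_measurable lborel \<and> (\<forall>x. 0 \<le> f x)
     \<and> integrable lborel f \<and> integral\<^sup>L lborel f = 1"

definition level_tau :: "real \<Rightarrow> ('a::euclidean_space \<Rightarrow> real) \<Rightarrow> real" where
  "level_tau \<tau> f = Inf {y. 0 \<le> y \<and>
     integral\<^sup>L lborel (\<lambda>x. f x * indicator {z. y \<le> f z} x) \<le> 1 - \<tau>}"

definition beta_set :: "real \<Rightarrow> ('a::euclidean_space \<Rightarrow> real) \<Rightarrow> 'a set" where
  "beta_set \<tau> f = {x. f x = level_tau \<tau> f}"

definition enlarge :: "'a::metric_space set \<Rightarrow> real \<Rightarrow> 'a set" where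
  "enlarge A \<delta> = (\<Union>x\<in>A. cball x \<delta>)"

definition grad :: "('a::euclidean_space \<Rightarrow> real) \<Rightarrow> 'a \<Rightarrow> 'a" where
  "grad f x = (\<Sum>i\<in>Basis. frechet_derivative f (at x) i *\<^sub>R i)"

definition C2_bounded :: "('a::euclidean_space \<Rightarrow> real) \<Rightarrow> bool" where
  "C2_bounded f \<longleftrightarrow> (\<exists>Df D2f.
     (\<forall>x. (f has_derivative Df x) (at x)) \<and>
     (\<forall>i\<in>Basis. \<forall>x. ((\<lambda>y. Df y i) has_derivative D2f x i) (at x)) \<and>
     (\<forall>i\<in>Basis. continuous_on UNIV (\<lambda>x. Df x i) \<and> bounded (range (\<lambda>x. Df x i))) \<and>
     (\<forall>i\<in>Basis. \<forall>j\<in>Basis. continuous_on UNIV (\<lambda>x. D2f x i j)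
        \<and> bounded (range (\<lambda>x. D2f x i j))))"

end

theory Submission
  imports Defs
begin

(* Write G(y) = upper_mass f y for the mass of f on {f >= y}, so that f_tau(f) is the infimum of
   the y >= 0 with G(y) <= 1 - tau.  If |f~ - f0| <= eps, then {f~ >= y} lies between
   {f0 >= y + eps} and {f0 >= y - eps}, and on these sets eps <= eps / (y -+ eps) * f0; hence
   G_f~(y) is squeezed between G_f0(y + eps) - eps / (y + eps) and G_f0(y - eps) + eps / (y - eps).
   On the other hand G_f0 drops at a linear rate across c = f_tau,0 > 0: at a point of beta_tau some
   partial derivative of f0 is nonzero, so on a small box around it f0 is strictly monotone in that
   coordinate, and translating the sublevel set {f0 < s} in that direction shows that every slab
   {s <= f0 < s + k} with s near c has measure at least kappa k.  Together the two estimates pin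
   f~_tau to within O(eps) of c. *)

definition upper_mass :: "('a::euclidean_space \<Rightarrow> real) \<Rightarrow> real \<Rightarrow> real" where
  "upper_mass f y = integral\<^sup>L lborel (\<lambda>x. f x * indicator {z. y \<le> f z} x)"

definition slab_growth ::
    "('a::euclidean_space \<Rightarrow> real) \<Rightarrow> 'a set \<Rightarrow> real \<Rightarrow> real \<Rightarrow> real \<Rightarrow> bool" where
  "slab_growth f B c \<eta> \<kappa> \<longleftrightarrow> B \<in> sets lborel \<and> bounded B \<and>
     (\<forall>s k. \<bar>s - c\<bar> \<le> \<eta> \<longrightarrow> 0 < k \<longrightarrow> k \<le> \<eta> \<longrightarrow>
        \<kappa> * k \<le> measure lborel {x\<in>B. f x \<in> {s..<s + k}})"

lemma level_tau_upper_mass: "level_tau \<tau> f = Inf {y. 0 \<le> y \<and> upper_mass f y \<le> 1 - \<tau>}"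
  unfolding level_tau_def upper_mass_def ..

lemma integrable_upper_mass:
  assumes "prob_density f"
  shows "integrable lborel (\<lambda>x. f x * indicator {z. y \<le> f z} x)"
proof -
  have "f \<in> borel_measurable lborel" "integrable lborel f"
    using assms by (auto simp: prob_density_def)
  moreover from this have "{z. y \<le> f z} \<in> sets lborel"
    by measurable
  ultimately show ?thesis
    by (intro integrable_real_mult_indicator)
qed

lemma upper_mass_antimono:
  assumes f: "prob_density f" and "y \<le> y'"
  shows "upper_mass f y' \<le> upper_mass f y"
  unfolding upper_mass_def
proof (rule integral_mono[OF integrable_upper_mass[OF f] integrable_upper_mass[OF f]])
  fix x
  show "f x * indicator {z. y' \<le> f z} x \<le> f x * indicator {z. y \<le> f z} x"
    using f \<open>y \<le> y'\<close> by (auto simp: prob_density_def indicator_def)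
qed

lemma upper_mass_eq_0:
  assumes "\<forall>x. f x < y"
  shows "upper_mass f y = 0"
proof -
  have "(\<lambda>x. f x * indicator {z. y \<le> f z} x) = (\<lambda>x. 0)"
    using assms by (auto simp: fun_eq_iff indicator_def not_le)
  then show ?thesis
    by (simp add: upper_mass_def)
qed

lemma upper_mass_eq_1:
  assumes "prob_density f" "\<forall>x. y \<le> f x"
  shows "upper_mass f y = 1"
  using assms by (simp add: upper_mass_def prob_density_def)

lemma upper_mass_perturb_ge:
  assumes f0: "prob_density f0" and ft: "prob_density ft"
    and close: "\<forall>x. \<bar>ft x - f0 x\<bar> \<le> \<epsilon>" and pos: "0 < y + \<epsilon>"
  shows "upper_mass f0 (y + \<epsilon>) - \<epsilon> / (y + \<epsilon>) \<le> upper_mass ft y"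
proof -
  have i0: "integrable lborel f0" "integral\<^sup>L lborel f0 = 1"
    using f0 by (auto simp: prob_density_def)
  have "upper_mass f0 (y + \<epsilon>) - \<epsilon> / (y + \<epsilon>) =
      integral\<^sup>L lborel (\<lambda>x. f0 x * indicator {z. y + \<epsilon> \<le> f0 z} x - \<epsilon> / (y + \<epsilon>) * f0 x)"
    unfolding upper_mass_def using integrable_upper_mass[OF f0] i0 by simp
  also have "\<dots> \<le> upper_mass ft y"
    unfolding upper_mass_def
  proof (rule integral_mono)
    show "integrable lborel (\<lambda>x. f0 x * indicator {z. y + \<epsilon> \<le> f0 z} x - \<epsilon> / (y + \<epsilon>) * f0 x)"
      using integrable_upper_mass[OF f0] i0 by auto
    show "integrable lborel (\<lambda>x. ft x * indicator {z. y \<le> ft z} x)"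
      by (rule integrable_upper_mass[OF ft])
    fix x
    have ex: "\<bar>ft x - f0 x\<bar> \<le> \<epsilon>" and ft0: "0 \<le> ft x" and f0x: "0 \<le> f0 x"
      using close ft f0 by (auto simp: prob_density_def)
    show "f0 x * indicator {z. y + \<epsilon> \<le> f0 z} x - \<epsilon> / (y + \<epsilon>) * f0 x
        \<le> ft x * indicator {z. y \<le> ft z} x"
    proof (cases "y + \<epsilon> \<le> f0 x")
      case True
      have "\<epsilon> * (y + \<epsilon>) \<le> \<epsilon> * f0 x"
        using True ex by (intro mult_left_mono) auto
      then have "\<epsilon> \<le> \<epsilon> / (y + \<epsilon>) * f0 x"
        using pos by (simp add: field_simps)
      with True ex show ?thesis
        by (auto simp: indicator_def abs_le_iff)
    next
      case False
      have "0 \<le> \<epsilon> / (y + \<epsilon>) * f0 x"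
        using ex pos f0x by (intro mult_nonneg_nonneg divide_nonneg_pos) auto
      with False ft0 show ?thesis
        by (simp add: indicator_def)
    qed
  qed
  finally show ?thesis .
qed

lemma upper_mass_perturb_le:
  assumes f0: "prob_density f0" and ft: "prob_density ft"
    and close: "\<forall>x. \<bar>ft x - f0 x\<bar> \<le> \<epsilon>" and pos: "0 < y - \<epsilon>"
  shows "upper_mass ft y \<le> upper_mass f0 (y - \<epsilon>) + \<epsilon> / (y - \<epsilon>)"
proof -
  have i0: "integrable lborel f0" "integral\<^sup>L lborel f0 = 1"
    using f0 by (auto simp: prob_density_def)
  have "upper_mass ft y \<le>
      integral\<^sup>L lborel (\<lambda>x. f0 x * indicator {z. y - \<epsilon> \<le> f0 z} x + \<epsilon> / (y - \<epsilon>) * f0 x)"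
    unfolding upper_mass_def
  proof (rule integral_mono)
    show "integrable lborel (\<lambda>x. f0 x * indicator {z. y - \<epsilon> \<le> f0 z} x + \<epsilon> / (y - \<epsilon>) * f0 x)"
      using integrable_upper_mass[OF f0] i0 by auto
    show "integrable lborel (\<lambda>x. ft x * indicator {z. y \<le> ft z} x)"
      by (rule integrable_upper_mass[OF ft])
    fix x
    have ex: "\<bar>ft x - f0 x\<bar> \<le> \<epsilon>" and "0 \<le> ft x" "0 \<le> f0 x"
      using close ft f0 by (auto simp: prob_density_def)
    moreover have "\<epsilon> \<le> \<epsilon> / (y - \<epsilon>) * f0 x" if "y - \<epsilon> \<le> f0 x"
    proof -
      have "\<epsilon> * (y - \<epsilon>) \<le> \<epsilon> * f0 x"
        using that ex by (intro mult_left_mono) auto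
      then show ?thesis
        using pos by (simp add: field_simps)
    qed
    ultimately show "ft x * indicator {z. y \<le> ft z} x
        \<le> f0 x * indicator {z. y - \<epsilon> \<le> f0 z} x + \<epsilon> / (y - \<epsilon>) * f0 x"
      using pos by (auto simp: indicator_def abs_le_iff)
  qed
  also have "\<dots> = upper_mass f0 (y - \<epsilon>) + \<epsilon> / (y - \<epsilon>)"
    unfolding upper_mass_def using integrable_upper_mass[OF f0] i0 by simp
  finally show ?thesis .
qed

lemma measure_slab_le_upper_mass_diff:
  assumes f: "prob_density f" and B: "B \<in> sets lborel" "bounded B" and s: "0 \<le> s" and k: "0 \<le> k"
  shows "s * measure lborel {x\<in>B. f x \<in> {s..<s + k}} \<le> upper_mass f s - upper_mass f (s + k)"
proof -
  let ?A = "{x\<in>B. f x \<in> {s..<s + k}}"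
  have "f \<in> borel_measurable lborel"
    using f by (simp add: prob_density_def)
  then have "?A \<in> sets lborel"
    using B(1) by measurable
  moreover have "emeasure lborel ?A < \<infinity>"
    by (rule emeasure_bounded_finite, rule bounded_subset[OF B(2)]) auto
  ultimately have "s * measure lborel ?A = integral\<^sup>L lborel (\<lambda>x. s * indicator ?A x)"
    and "integrable lborel (\<lambda>x. s * indicator ?A x)"
    by (simp_all add: integrable_indicator_iff)
  moreover have "integral\<^sup>L lborel (\<lambda>x. s * indicator ?A x) \<le> integral\<^sup>L lborel
      (\<lambda>x. f x * indicator {z. s \<le> f z} x - f x * indicator {z. s + k \<le> f z} x)"
  proof (rule integral_mono)
    show "integrable lborel (\<lambda>x. s * indicator ?A x)"
      by fact
    show "integrable lborel
        (\<lambda>x. f x * indicator {z. s \<le> f z} x - f x * indicator {z. s + k \<le> f z} x)"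
      using integrable_upper_mass[OF f] by auto
    fix x
    show "s * indicator ?A x \<le> f x * indicator {z. s \<le> f z} x - f x * indicator {z. s + k \<le> f z} x"
      using f k by (cases "x \<in> ?A") (auto simp: indicator_def prob_density_def)
  qed
  moreover have "integral\<^sup>L lborel
      (\<lambda>x. f x * indicator {z. s \<le> f z} x - f x * indicator {z. s + k \<le> f z} x)
      = upper_mass f s - upper_mass f (s + k)"
    unfolding upper_mass_def using integrable_upper_mass[OF f] by simp
  ultimately show ?thesis
    by simp
qed

lemma slab_growthD:
  assumes "slab_growth f B c \<eta> \<kappa>"
  shows "B \<in> sets lborel" "bounded B"
    and "\<bar>s - c\<bar> \<le> \<eta> \<Longrightarrow> 0 < k \<Longrightarrow> k \<le> \<eta> \<Longrightarrow> \<kappa> * k \<le> measure lborel {x\<in>B. f x \<in> {s..<s + k}}"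
  using assms by (simp_all add: slab_growth_def)

lemma level_tau_le:
  assumes "0 \<le> y" "upper_mass f y \<le> 1 - \<tau>"
  shows "level_tau \<tau> f \<le> y"
  unfolding level_tau_upper_mass using assms by (intro cInf_lower bdd_belowI[of _ 0]) auto

lemma upper_mass_gt_below_level_tau:
  assumes "0 \<le> y" "y < level_tau \<tau> f"
  shows "1 - \<tau> < upper_mass f y"
  using level_tau_le[of y f \<tau>] assms by linarith

lemma ex_upper_mass_le_of_bounded:
  assumes "bounded (range f)" "\<tau> \<le> 1"
  shows "\<exists>y\<ge>0. upper_mass f y \<le> 1 - \<tau>"
proof -
  obtain M where "\<forall>x. \<bar>f x\<bar> \<le> M"
    using assms(1) by (auto simp: bounded_iff)
  then have "upper_mass f (\<bar>M\<bar> + 1) = 0"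
    by (intro upper_mass_eq_0) (smt (verit))
  then show ?thesis
    using assms(2) by (intro exI[of _ "\<bar>M\<bar> + 1"]) auto
qed

lemma level_tau_nonneg:
  assumes "\<exists>y\<ge>0. upper_mass f y \<le> 1 - \<tau>"
  shows "0 \<le> level_tau \<tau> f"
  unfolding level_tau_upper_mass using assms by (intro cInf_greatest) auto

lemma upper_mass_le_above_level_tau:
  assumes f: "prob_density f" and ne: "\<exists>y\<ge>0. upper_mass f y \<le> 1 - \<tau>"
    and y: "level_tau \<tau> f < y"
  shows "upper_mass f y \<le> 1 - \<tau>"
proof -
  obtain y' where "0 \<le> y'" "upper_mass f y' \<le> 1 - \<tau>" "y' < y"
    using y ne unfolding level_tau_upper_mass
    by (subst (asm) cInf_less_iff) (auto intro: bdd_belowI[of _ 0])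
  then show ?thesis
    using upper_mass_antimono[OF f, of y' y] by simp
qed

lemma level_tau_perturb:
  assumes f0: "prob_density f0" and ft: "prob_density ft"
    and close: "\<forall>x. \<bar>ft x - f0 x\<bar> \<le> \<epsilon>" and h: "0 < h" "h < c"
    and above: "upper_mass f0 (c + h) + \<epsilon> / (c + h) \<le> 1 - \<tau>"
    and below: "1 - \<tau> + \<epsilon> / (c - h) < upper_mass f0 (c - h)"
  shows "\<bar>level_tau \<tau> ft - c\<bar> \<le> h + \<epsilon>"
proof -
  have "0 \<le> \<epsilon>"
    using close by (meson abs_ge_zero order_trans)
  have up: "upper_mass ft (c + h + \<epsilon>) \<le> 1 - \<tau>"
    using upper_mass_perturb_le[OF f0 ft close, of "c + h + \<epsilon>"] h above by simp
  have low: "c - h - \<epsilon> < y" if "upper_mass ft y \<le> 1 - \<tau>" for y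
  proof (rule ccontr)
    assume "\<not> c - h - \<epsilon> < y"
    then have "upper_mass ft (c - h - \<epsilon>) \<le> upper_mass ft y"
      by (intro upper_mass_antimono[OF ft]) simp
    moreover have "upper_mass f0 (c - h) - \<epsilon> / (c - h) \<le> upper_mass ft (c - h - \<epsilon>)"
      using upper_mass_perturb_ge[OF f0 ft close, of "c - h - \<epsilon>"] h by simp
    ultimately show False
      using that below by linarith
  qed
  have "level_tau \<tau> ft \<le> c + h + \<epsilon>"
    using up h \<open>0 \<le> \<epsilon>\<close> by (intro level_tau_le) auto
  moreover have "c - h - \<epsilon> \<le> level_tau \<tau> ft"
    unfolding level_tau_upper_mass
  proof (rule cInf_greatest)
    show "{y. 0 \<le> y \<and> upper_mass ft y \<le> 1 - \<tau>} \<noteq> {}"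
      using up h \<open>0 \<le> \<epsilon>\<close> by (intro ex_in_conv[THEN iffD1] exI[of _ "c + h + \<epsilon>"]) auto
  qed (auto intro: less_imp_le low)
  ultimately show ?thesis
    by (simp add: abs_le_iff)
qed

lemma ex_ge_level_tau_minus:
  fixes f :: "'a::euclidean_space \<Rightarrow> real"
  assumes f: "prob_density f" and \<tau>: "\<tau> \<le> 1" and a: "0 < a"
  shows "\<exists>x. level_tau \<tau> f - a \<le> f x"
proof (rule ccontr)
  assume "\<nexists>x. level_tau \<tau> f - a \<le> f x"
  then have below: "\<forall>x. f x < level_tau \<tau> f - a"
    by (simp add: not_le)
  have "0 \<le> f 0"
    using f by (simp add: prob_density_def)
  then have "0 \<le> level_tau \<tau> f - a"
    using below[rule_format, of 0] by linarith
  then have "level_tau \<tau> f \<le> level_tau \<tau> f - a"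
    using \<tau> by (intro level_tau_le) (simp_all add: upper_mass_eq_0[OF below])
  with a show False
    by simp
qed

lemma ex_le_level_tau_plus:
  fixes f :: "'a::euclidean_space \<Rightarrow> real"
  assumes f: "prob_density f" and ne: "\<exists>y\<ge>0. upper_mass f y \<le> 1 - \<tau>" and \<tau>: "0 < \<tau>"
    and a: "0 < a"
  shows "\<exists>x. f x \<le> level_tau \<tau> f + a"
proof (rule ccontr)
  assume "\<nexists>x. f x \<le> level_tau \<tau> f + a"
  then have "\<forall>x. level_tau \<tau> f + a \<le> f x"
    by (simp add: not_le less_imp_le)
  then have "upper_mass f (level_tau \<tau> f + a) = 1"
    by (rule upper_mass_eq_1[OF f])
  moreover have "upper_mass f (level_tau \<tau> f + a) \<le> 1 - \<tau>"
    using a by (intro upper_mass_le_above_level_tau[OF f ne]) simp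
  ultimately show False
    using \<tau> by simp
qed

lemma level_tau_nearly_attained:
  fixes f :: "'a::euclidean_space \<Rightarrow> real"
  assumes f: "prob_density f" and cont: "continuous_on UNIV f" and bdd: "bounded (range f)"
    and \<tau>: "0 < \<tau>" "\<tau> < 1" and a: "0 < a"
  obtains x where "level_tau \<tau> f - a \<le> f x" "f x \<le> level_tau \<tau> f + a"
proof -
  let ?c = "level_tau \<tau> f"
  have ne: "\<exists>y\<ge>0. upper_mass f y \<le> 1 - \<tau>"
    using bdd \<tau> by (intro ex_upper_mass_le_of_bounded) auto
  obtain x1 x2 where x1: "?c - a \<le> f x1" and x2: "f x2 \<le> ?c + a"
    using ex_ge_level_tau_minus[OF f _ a] ex_le_level_tau_plus[OF f ne _ a] \<tau> by force
  show ?thesis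
  proof (cases "f x1 \<le> ?c + a")
    case True
    with x1 show ?thesis
      by (rule that)
  next
    case False
    have "connected (range f)"
      using cont by (rule connected_continuous_image[OF _ connected_UNIV])
    then have "?c + a \<in> range f"
      using x2 False by (intro connectedD_interval[OF _ rangeI[of f x2] rangeI[of f x1]]) simp_all
    then obtain x where "?c + a = f x"
      by (rule rangeE)
    with a show ?thesis
      by (intro that[of x]; linarith)
  qed
qed

lemma beta_set_regular_point:
  fixes f :: "'a::euclidean_space \<Rightarrow> real"
  assumes f: "prob_density f" and cont: "continuous_on UNIV f" and bdd: "bounded (range f)"
    and \<tau>: "0 < \<tau>" "\<tau> < 1"
    and U: "\<exists>a>0. (\<exists>c>0. \<forall>x\<in>{x. level_tau \<tau> f - a \<le> f x \<and> f x \<le> level_tau \<tau> f + a}.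
                   c \<le> norm (grad f x))
               \<and> (\<exists>\<delta>>0. {x. level_tau \<tau> f - a \<le> f x \<and> f x \<le> level_tau \<tau> f + a}
                          \<subseteq> enlarge (beta_set \<tau> f) \<delta>)"
  obtains x0 where "f x0 = level_tau \<tau> f" "grad f x0 \<noteq> 0"
proof -
  let ?U = "\<lambda>a. {x. level_tau \<tau> f - a \<le> f x \<and> f x \<le> level_tau \<tau> f + a}"
  obtain a cg \<delta> where a: "0 < a" and cg: "0 < cg" and grad: "\<forall>x\<in>?U a. cg \<le> norm (grad f x)"
    and sub: "?U a \<subseteq> enlarge (beta_set \<tau> f) \<delta>"
    using U by blast
  obtain x where "x \<in> ?U a"
    using level_tau_nearly_attained[OF f cont bdd \<tau> a] by blast
  then obtain x0 where x0: "f x0 = level_tau \<tau> f"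
    using sub unfolding enlarge_def beta_set_def by blast
  then have "x0 \<in> ?U a"
    using a by simp
  with grad cg have "grad f x0 \<noteq> 0"
    by force
  with x0 show ?thesis
    by (rule that)
qed

lemma upper_mass_decay_above_level_tau:
  fixes f :: "'a::euclidean_space \<Rightarrow> real" and \<tau> :: real
  defines "c \<equiv> level_tau \<tau> f"
  assumes f: "prob_density f" and ne: "\<exists>y\<ge>0. upper_mass f y \<le> 1 - \<tau>"
    and slab: "slab_growth f B c \<eta> \<kappa>" and h: "0 < h" "h \<le> \<eta>"
  shows "upper_mass f (c + h) \<le> 1 - \<tau> - c * \<kappa> * h / 2"
proof -
  let ?A = "{x\<in>B. f x \<in> {c + h/2..<c + h/2 + h/2}}"
  have c: "0 \<le> c"
    unfolding c_def using ne by (rule level_tau_nonneg)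
  have "\<kappa> * (h/2) \<le> measure lborel ?A"
    using slab_growthD(3)[OF slab, of "c + h/2" "h/2"] h by simp
  have "c * \<kappa> * h / 2 = c * (\<kappa> * (h/2))"
    by simp
  also have "\<dots> \<le> c * measure lborel ?A"
    using \<open>\<kappa> * (h/2) \<le> measure lborel ?A\<close> c by (rule mult_left_mono)
  also have "\<dots> \<le> (c + h/2) * measure lborel ?A"
    using h by (intro mult_right_mono) auto
  also have "\<dots> \<le> upper_mass f (c + h/2) - upper_mass f (c + h)"
    using measure_slab_le_upper_mass_diff[OF f slab_growthD(1,2)[OF slab], of "c + h/2" "h/2"] h c
    by (simp add: add.commute)
  finally show ?thesis
    using upper_mass_le_above_level_tau[OF f ne, of "c + h/2"] h unfolding c_def by simp
qed

lemma upper_mass_growth_below_level_tau: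
  fixes f :: "'a::euclidean_space \<Rightarrow> real" and \<tau> :: real
  defines "c \<equiv> level_tau \<tau> f"
  assumes f: "prob_density f" and slab: "slab_growth f B c \<eta> \<kappa>"
    and h: "0 < h" "h \<le> \<eta>" "h \<le> c / 2"
  shows "1 - \<tau> + c * \<kappa> * h / 4 < upper_mass f (c - h)"
proof -
  let ?A = "{x\<in>B. f x \<in> {c - h..<c - h + h/2}}"
  have c_half: "0 \<le> c / 2"
    using h by simp
  have "\<kappa> * (h/2) \<le> measure lborel ?A"
    using slab_growthD(3)[OF slab, of "c - h" "h/2"] h by simp
  have "c * \<kappa> * h / 4 = c / 2 * (\<kappa> * (h/2))"
    by simp
  also have "\<dots> \<le> c / 2 * measure lborel ?A"
    using \<open>\<kappa> * (h/2) \<le> measure lborel ?A\<close> c_half by (rule mult_left_mono)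
  also have "\<dots> \<le> (c - h) * measure lborel ?A"
    using h by (intro mult_right_mono) auto
  also have "\<dots> \<le> upper_mass f (c - h) - upper_mass f (c - h/2)"
    using measure_slab_le_upper_mass_diff[OF f slab_growthD(1,2)[OF slab], of "c - h" "h/2"] h
    by simp
  finally show ?thesis
    using upper_mass_gt_below_level_tau[of "c - h/2" \<tau> f] h unfolding c_def by simp
qed

lemma level_tau_perturb_linear:
  fixes f0 ft :: "'a::euclidean_space \<Rightarrow> real" and \<tau> :: real
  defines "c \<equiv> level_tau \<tau> f0"
  assumes f0: "prob_density f0" and ne: "\<exists>y\<ge>0. upper_mass f0 y \<le> 1 - \<tau>"
    and slab: "slab_growth f0 B c \<eta> \<kappa>" and c: "0 < c" and \<kappa>: "0 < \<kappa>"
    and ft: "prob_density ft" and close: "\<forall>x. \<bar>ft x - f0 x\<bar> \<le> \<epsilon>"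
    and \<epsilon>: "0 < \<epsilon>" "8 * \<epsilon> / (c\<^sup>2 * \<kappa>) \<le> min \<eta> (c / 2)"
  shows "\<bar>level_tau \<tau> ft - c\<bar> \<le> (1 + 8 / (c\<^sup>2 * \<kappa>)) * \<epsilon>"
proof -
  define h where "h = 8 * \<epsilon> / (c\<^sup>2 * \<kappa>)"
  have h: "0 < h" "h \<le> \<eta>" "h \<le> c / 2"
    using \<epsilon> c \<kappa> by (simp_all add: h_def)
  have "c * \<kappa> * h = 8 * \<epsilon> / c"
    unfolding h_def using c \<kappa> by (simp add: power2_eq_square)
  then have ckh: "c * \<kappa> * h / 2 = 4 * (\<epsilon> / c)" "c * \<kappa> * h / 4 = 2 * (\<epsilon> / c)"
    by simp_all
  note decay = upper_mass_decay_above_level_tau[OF f0 ne slab[unfolded c_def] h(1,2), folded c_def]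
  note growth = upper_mass_growth_below_level_tau[OF f0 slab[unfolded c_def] h[unfolded c_def],
      folded c_def]
  have "\<epsilon> / (c + h) \<le> \<epsilon> / c"
    using \<epsilon> c h by (intro divide_left_mono) auto
  moreover have "0 \<le> \<epsilon> / c"
    using \<epsilon> c by simp
  ultimately have above: "upper_mass f0 (c + h) + \<epsilon> / (c + h) \<le> 1 - \<tau>"
    using decay ckh(1) by linarith
  have "\<epsilon> / (c - h) \<le> \<epsilon> / (c / 2)"
    using \<epsilon> c h by (intro divide_left_mono) auto
  also have "\<dots> = 2 * (\<epsilon> / c)"
    by simp
  finally have below: "1 - \<tau> + \<epsilon> / (c - h) < upper_mass f0 (c - h)"
    using growth ckh(2) by linarith
  have "\<bar>level_tau \<tau> ft - c\<bar> \<le> h + \<epsilon>"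
    using h c by (intro level_tau_perturb[OF f0 ft close _ _ above below]) auto
  then show ?thesis
    by (simp add: h_def algebra_simps)
qed

lemma level_tau_stable:
  fixes f0 :: "'a::euclidean_space \<Rightarrow> real" and \<tau> :: real
  defines "c \<equiv> level_tau \<tau> f0"
  assumes f0: "prob_density f0" and ne: "\<exists>y\<ge>0. upper_mass f0 y \<le> 1 - \<tau>"
    and slab: "slab_growth f0 B c \<eta> \<kappa>" and c: "0 < c" and \<kappa>: "0 < \<kappa>" and \<eta>: "0 < \<eta>"
  shows "\<exists>C\<ge>1. \<exists>\<epsilon>0>0. \<forall>\<epsilon>. 0 < \<epsilon> \<and> \<epsilon> < \<epsilon>0 \<longrightarrow>
           (\<forall>ft. prob_density ft \<and> (\<forall>x. \<bar>ft x - f0 x\<bar> \<le> \<epsilon>) \<longrightarrow> \<bar>level_tau \<tau> ft - c\<bar> \<le> C * \<epsilon>)"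
proof (intro exI conjI allI impI)
  show "1 \<le> 1 + 8 / (c\<^sup>2 * \<kappa>)" "0 < min \<eta> (c / 2) * (c\<^sup>2 * \<kappa>) / 8"
    using c \<kappa> \<eta> by simp_all
  fix \<epsilon> and ft :: "'a \<Rightarrow> real"
  assume \<epsilon>: "0 < \<epsilon> \<and> \<epsilon> < min \<eta> (c / 2) * (c\<^sup>2 * \<kappa>) / 8"
    and ft: "prob_density ft \<and> (\<forall>x. \<bar>ft x - f0 x\<bar> \<le> \<epsilon>)"
  have "8 * \<epsilon> / (c\<^sup>2 * \<kappa>) < min \<eta> (c / 2)"
    using \<epsilon> c \<kappa> by (subst pos_divide_less_eq) (simp, linarith)
  then show "\<bar>level_tau \<tau> ft - c\<bar> \<le> (1 + 8 / (c\<^sup>2 * \<kappa>)) * \<epsilon>"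
    using ft \<epsilon> c \<kappa> unfolding c_def
    by (intro level_tau_perturb_linear[OF f0 ne slab[unfolded c_def]]) auto
qed

lemma isCont_sign_bounded_away:
  fixes g :: "'a::metric_space \<Rightarrow> real"
  assumes cont: "isCont g x0" and nz: "g x0 \<noteq> 0"
  obtains \<sigma> \<rho> where "\<sigma> = 1 \<or> \<sigma> = -1" "0 < \<rho>" "\<And>z. dist z x0 < \<rho> \<Longrightarrow> \<bar>g x0\<bar> / 2 \<le> \<sigma> * g z"
proof -
  define \<sigma> where "\<sigma> = sgn (g x0)"
  have sg: "\<sigma> = 1 \<or> \<sigma> = -1" and \<sigma>g: "\<sigma> * g x0 = \<bar>g x0\<bar>"
    using nz by (auto simp: \<sigma>_def sgn_if)
  obtain \<rho> where \<rho>: "0 < \<rho>" and near: "\<And>z. dist z x0 < \<rho> \<Longrightarrow> \<bar>g z - g x0\<bar> < \<bar>g x0\<bar> / 2"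
    using cont nz unfolding continuous_at_eps_delta dist_real_def
    by (meson half_gt_zero zero_less_abs_iff)
  have "\<bar>g x0\<bar> / 2 \<le> \<sigma> * g z" if "dist z x0 < \<rho>" for z
  proof -
    have "\<sigma> * g z = \<bar>g x0\<bar> + \<sigma> * (g z - g x0)"
      using \<sigma>g by (simp add: algebra_simps)
    moreover have "\<bar>\<sigma> * (g z - g x0)\<bar> < \<bar>g x0\<bar> / 2"
      using near[OF that] sg by (auto simp: abs_minus_commute)
    ultimately show ?thesis
      by (simp add: abs_less_iff)
  qed
  with sg \<rho> show ?thesis
    by (rule that)
qed

lemma lipschitz_of_bounded_partials:
  fixes f :: "'a::euclidean_space \<Rightarrow> real"
  assumes der: "\<forall>x. (f has_derivative Df x) (at x)"
    and bdd: "\<forall>j\<in>Basis. bounded (range (\<lambda>x. Df x j))"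
  obtains L where "0 < L" "\<forall>x y. \<bar>f x - f y\<bar> \<le> L * norm (x - y)"
proof -
  have "bounded (\<Union>j\<in>Basis. range (\<lambda>x. Df x j))"
    using bdd by auto
  then obtain M where M: "0 < M" "\<And>j x. j \<in> Basis \<Longrightarrow> \<bar>Df x j\<bar> \<le> M"
    unfolding bounded_pos by auto
  have "\<bar>f x - f y\<bar> \<le> (DIM('a) * M) * norm (x - y)" for x y
  proof -
    have "norm (f x - f y) \<le> (DIM('a) * M) * norm (x - y)"
    proof (rule differentiable_bound[of UNIV])
      fix z :: 'a
      show "(f has_derivative Df z) (at z within UNIV)"
        using der by simp
      have lin: "linear (Df z)"
        using der has_derivative_linear by blast
      show "onorm (Df z) \<le> DIM('a) * M"
      proof (rule onorm_le)
        fix h :: 'a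
        have "norm (Df z h) = \<bar>\<Sum>j\<in>Basis. (h \<bullet> j) * Df z j\<bar>"
          using Linear_Algebra.linear_componentwise[OF lin, of h 1] by simp
        also have "\<dots> \<le> (\<Sum>j\<in>Basis. \<bar>h \<bullet> j\<bar> * \<bar>Df z j\<bar>)"
          by (rule order_trans[OF sum_abs]) (simp add: abs_mult)
        also have "\<dots> \<le> (\<Sum>j\<in>(Basis::'a set). norm h * M)"
          using M by (intro sum_mono mult_mono) (auto simp: Basis_le_norm)
        finally show "norm (Df z h) \<le> DIM('a) * M * norm h"
          by (simp add: mult_ac)
      qed
    qed auto
    then show ?thesis
      by simp
  qed
  then show ?thesis
    using that[of "DIM('a) * M"] M by simp
qed

lemma mem_cbox_centered:
  fixes x c w :: "'a::euclidean_space"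
  shows "x \<in> cbox (c - w) (c + w) \<longleftrightarrow> (\<forall>j\<in>Basis. \<bar>(x - c) \<bullet> j\<bar> \<le> w \<bullet> j)"
  by (auto simp: mem_box inner_diff_left inner_add_left abs_le_iff algebra_simps)

lemma norm_le_DIM_mult:
  fixes x :: "'a::euclidean_space" and r :: real
  assumes "\<forall>j\<in>Basis. \<bar>x \<bullet> j\<bar> \<le> r"
  shows "norm x \<le> DIM('a) * r"
proof -
  have "norm x \<le> (\<Sum>j\<in>Basis. \<bar>x \<bullet> j\<bar>)"
    by (rule norm_le_l1)
  also have "\<dots> \<le> (\<Sum>j\<in>(Basis::'a set). r)"
    using assms by (intro sum_mono) auto
  finally show ?thesis
    by simp
qed

lemma dist_less_of_mem_cbox_centered:
  fixes z c w :: "'a::euclidean_space" and r :: real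
  assumes z: "z \<in> cbox (c - w) (c + w)" and w: "\<forall>j\<in>Basis. w \<bullet> j \<le> r"
    and r: "DIM('a) * r < \<rho>"
  shows "dist z c < \<rho>"
proof -
  have "norm (z - c) \<le> DIM('a) * r"
    using z w unfolding mem_cbox_centered by (intro norm_le_DIM_mult) (metis order_trans)
  with r show ?thesis
    by (simp add: dist_norm)
qed

lemma measure_le_translate_diff:
  fixes T E S :: "'a::euclidean_space set"
  assumes T: "T \<in> lmeasurable" and E: "E \<in> lmeasurable" and S: "S \<in> lmeasurable"
    and ET: "E \<subseteq> T" and disj: "E \<inter> (+) v ` T = {}" and sub: "(+) v ` T - T \<subseteq> S"
  shows "measure lebesgue E \<le> measure lebesgue S"
proof -
  let ?T' = "(+) v ` T"
  have T': "?T' \<in> lmeasurable"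
    using T by (rule measurable_translation)
  have "measure lebesgue T - measure lebesgue (T - E) \<le> measure lebesgue (?T' - (T - E))"
    using measure_diff_le_measure_setdiff[OF T', of "T - E"] T E
    by (simp add: measure_translation fmeasurable_Diff fmeasurableD)
  also have "?T' - (T - E) = ?T' - T"
    using disj by blast
  also have "measure lebesgue (?T' - T) \<le> measure lebesgue S"
    using sub T' T S by (meson fmeasurableD fmeasurable_Diff measure_mono_fmeasurable)
  finally show ?thesis
    using T E ET by (simp add: measurable_measure_Diff fmeasurableD)
qed

lemma measure_cbox_one_side:
  fixes l u :: "'a::euclidean_space"
  assumes i: "i \<in> Basis" and lu: "\<forall>j\<in>Basis. (u - l) \<bullet> j = (if j = i then h else e)"
    and "0 \<le> h" "0 \<le> e"
  shows "measure lebesgue (cbox l u) = h * e ^ (DIM('a) - 1)"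
proof -
  have "\<forall>j\<in>Basis. l \<bullet> j \<le> u \<bullet> j"
  proof
    fix j :: 'a
    assume "j \<in> Basis"
    then have "0 \<le> (u - l) \<bullet> j"
      using lu assms(3,4) by simp
    then show "l \<bullet> j \<le> u \<bullet> j"
      by (simp add: inner_diff_left)
  qed
  then have "measure lebesgue (cbox l u) = (\<Prod>j\<in>Basis. (u - l) \<bullet> j)"
    by (simp add: measure_completion measure_lborel_cbox_eq)
  also have "\<dots> = (\<Prod>j\<in>Basis. if j = i then h else e)"
    using lu by (intro prod.cong) auto
  also have "\<dots> = h * e ^ (DIM('a) - 1)"
    using i by (simp add: prod.If_cases Int_absorb1 Diff_eq[symmetric] card_Diff_singleton)
  finally show ?thesis .
qed

lemma box_end_slab:
  fixes c w :: "'a::euclidean_space"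
  assumes i: "i \<in> Basis" and sg: "\<sigma> = 1 \<or> \<sigma> = -1"
    and w: "\<forall>j\<in>Basis. w \<bullet> j = (if j = i then r else r')"
    and r': "0 \<le> r'" and t: "0 \<le> t" "t \<le> 2 * r"
  obtains E where "E \<in> lmeasurable" "measure lebesgue E = t * (2 * r') ^ (DIM('a) - 1)"
    "\<And>x. x \<in> E \<Longrightarrow> x \<in> cbox (c - w) (c + w) \<and> \<sigma> * ((x - c) \<bullet> i) \<le> t - r"
proof -
  define \<alpha> where "\<alpha> = (if \<sigma> = 1 then 0 else 2 * r - t)"
  define l where "l = c - w + \<alpha> *\<^sub>R i"
  define u where "u = c + w - (2 * r - t - \<alpha>) *\<^sub>R i"
  have l: "l \<bullet> j = c \<bullet> j - w \<bullet> j + (if j = i then \<alpha> else 0)"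
    and u: "u \<bullet> j = c \<bullet> j + w \<bullet> j - (if j = i then 2 * r - t - \<alpha> else 0)" if "j \<in> Basis" for j
    using that i by (auto simp: l_def u_def inner_diff_left inner_add_left inner_Basis)
  have "measure lebesgue (cbox l u) = t * (2 * r') ^ (DIM('a) - 1)"
    using i w t r' by (intro measure_cbox_one_side) (auto simp: inner_diff_left l u)
  moreover have "x \<in> cbox (c - w) (c + w) \<and> \<sigma> * ((x - c) \<bullet> i) \<le> t - r" if "x \<in> cbox l u" for x
  proof -
    have x: "l \<bullet> j \<le> x \<bullet> j \<and> x \<bullet> j \<le> u \<bullet> j" if "j \<in> Basis" for j
      using \<open>x \<in> cbox l u\<close> that by (simp add: mem_box)
    have "\<bar>(x - c) \<bullet> j\<bar> \<le> w \<bullet> j" if "j \<in> Basis" for j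
      using x[OF that] l[OF that] u[OF that] w that t sg
      by (auto simp: \<alpha>_def inner_diff_left abs_le_iff split: if_splits)
    moreover have "\<sigma> * ((x - c) \<bullet> i) \<le> t - r"
      using x[OF i] l[OF i] u[OF i] w i sg by (auto simp: \<alpha>_def inner_diff_left)
    ultimately show ?thesis
      by (simp add: mem_cbox_centered)
  qed
  ultimately show ?thesis
    using that[of "cbox l u"] by blast
qed

lemma sets_lborel_cbox_preimage:
  fixes f :: "'a::euclidean_space \<Rightarrow> real"
  assumes f: "continuous_on UNIV f" and A: "A \<in> sets borel"
  shows "{x \<in> cbox a b. f x \<in> A} \<in> sets lborel"
proof -
  have "f \<in> borel_measurable lborel"
    using borel_measurable_continuous_onI[OF f] by simp
  then have "f -` A \<inter> space lborel \<in> sets lborel"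
    using A by (rule measurable_sets)
  then have "cbox a b \<inter> (f -` A \<inter> space lborel) \<in> sets lborel"
    by simp
  moreover have "{x \<in> cbox a b. f x \<in> A} = cbox a b \<inter> (f -` A \<inter> space lborel)"
    by auto
  ultimately show ?thesis
    by simp
qed

lemma lmeasurable_cbox_preimage:
  fixes f :: "'a::euclidean_space \<Rightarrow> real"
  assumes "continuous_on UNIV f" "A \<in> sets borel"
  shows "{x \<in> cbox a b. f x \<in> A} \<in> lmeasurable"
proof (rule bounded_set_imp_lmeasurable)
  show "bounded {x \<in> cbox a b. f x \<in> A}"
    by (rule bounded_subset[OF bounded_cbox]) blast
  show "{x \<in> cbox a b. f x \<in> A} \<in> sets lebesgue"
    using sets_lborel_cbox_preimage[OF assms] by (rule sets_completionI_sets)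
qed

lemma shifted_sublevel_diff_subset_slab:
  fixes f :: "'a::euclidean_space \<Rightarrow> real" and c w :: 'a
  defines "B \<equiv> cbox (c - w) (c + w)"
  assumes i: "i \<in> Basis" and sg: "\<sigma> = 1 \<or> \<sigma> = -1"
    and w: "\<forall>j\<in>Basis. w \<bullet> j = (if j = i then r else r')" and t: "0 < t" "t \<le> r / 2"
    and Lip: "\<forall>x y. \<bar>f x - f y\<bar> \<le> L * norm (x - y)"
    and high: "\<And>x. x \<in> B \<Longrightarrow> r / 2 \<le> \<sigma> * ((x - c) \<bullet> i) \<Longrightarrow> s \<le> f x"
  shows "(+) ((\<sigma> * t) *\<^sub>R i) ` {x\<in>B. f x \<in> {..<s}} - {x\<in>B. f x \<in> {..<s}}
           \<subseteq> {x\<in>B. f x \<in> {s..<s + L * t}}"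
proof
  fix x
  assume "x \<in> (+) ((\<sigma> * t) *\<^sub>R i) ` {x\<in>B. f x \<in> {..<s}} - {x\<in>B. f x \<in> {..<s}}"
  then obtain y where y: "y \<in> B" "f y < s" and x: "x = (\<sigma> * t) *\<^sub>R i + y" "x \<notin> B \<or> s \<le> f x"
    by auto
  have memB: "z \<in> B \<longleftrightarrow> (\<forall>j\<in>Basis. \<bar>(z - c) \<bullet> j\<bar> \<le> w \<bullet> j)" for z
    unfolding B_def by (rule mem_cbox_centered)
  have x_coord: "(x - c) \<bullet> j = (y - c) \<bullet> j + (if j = i then \<sigma> * t else 0)" if "j \<in> Basis" for j
    using that i x(1) by (auto simp: inner_add_left inner_diff_left inner_Basis)
  have "\<sigma> * ((y - c) \<bullet> i) < r / 2"
    using high[OF y(1)] y(2) by force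
  moreover have "\<bar>(y - c) \<bullet> i\<bar> \<le> r"
    using y(1) i w by (auto simp: memB)
  ultimately have "\<bar>(x - c) \<bullet> i\<bar> \<le> r"
    using x_coord[OF i] sg t by (auto simp: abs_le_iff algebra_simps)
  then have "x \<in> B"
    using y(1) x_coord w by (auto simp: memB)
  moreover have "norm (x - y) = t"
    using x(1) sg t i by auto
  then have "f x < s + L * t"
    using Lip[rule_format, of x y] y(2) by (auto simp: abs_le_iff)
  ultimately show "x \<in> {x\<in>B. f x \<in> {s..<s + L * t}}"
    using x(2) by simp
qed

lemma box_slab_measure_ge:
  fixes f :: "'a::euclidean_space \<Rightarrow> real" and c w :: 'a
  defines "B \<equiv> cbox (c - w) (c + w)"
  assumes i: "i \<in> Basis" and sg: "\<sigma> = 1 \<or> \<sigma> = -1"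
    and w: "\<forall>j\<in>Basis. w \<bullet> j = (if j = i then r else r')" and r': "0 \<le> r'"
    and t: "0 < t" "t \<le> r / 2"
    and f: "continuous_on UNIV f" and Lip: "\<forall>x y. \<bar>f x - f y\<bar> \<le> L * norm (x - y)"
    and low: "\<And>x. x \<in> B \<Longrightarrow> \<sigma> * ((x - c) \<bullet> i) \<le> - r / 2 \<Longrightarrow> f x < s"
    and high: "\<And>x. x \<in> B \<Longrightarrow> r / 2 \<le> \<sigma> * ((x - c) \<bullet> i) \<Longrightarrow> s \<le> f x"
  shows "t / 2 * (2 * r') ^ (DIM('a) - 1) \<le> measure lebesgue {x\<in>B. f x \<in> {s..<s + L * t}}"
proof -
  define T where "T = {x\<in>B. f x \<in> {..<s}}"
  define v where "v = (\<sigma> * t) *\<^sub>R i"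
  have T: "T \<in> lmeasurable" and S: "{x\<in>B. f x \<in> {s..<s + L * t}} \<in> lmeasurable"
    unfolding T_def B_def by (rule lmeasurable_cbox_preimage[OF f], simp)+
  have "0 \<le> t / 2" "t / 2 \<le> 2 * r"
    using t by auto
  then obtain E where E: "E \<in> lmeasurable" "measure lebesgue E = t / 2 * (2 * r') ^ (DIM('a) - 1)"
    and E_end: "\<And>x. x \<in> E \<Longrightarrow> x \<in> B \<and> \<sigma> * ((x - c) \<bullet> i) \<le> t / 2 - r"
    unfolding B_def by (rule box_end_slab[OF i sg w r', where c = c]) blast+
  have ET: "E \<subseteq> T"
    using E_end low t by (fastforce simp: T_def)
  have "E \<inter> (+) v ` T = {}"
  proof (rule ccontr)
    assume "E \<inter> (+) v ` T \<noteq> {}"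
    then obtain y where y: "y \<in> B" "v + y \<in> E"
      by (auto simp: T_def)
    have "\<bar>(y - c) \<bullet> i\<bar> \<le> r"
      using y(1) i w unfolding B_def mem_cbox_centered by force
    moreover have "\<sigma> * ((v + y - c) \<bullet> i) \<le> t / 2 - r"
      using E_end y(2) by blast
    moreover have "\<sigma> * ((v + y - c) \<bullet> i) = \<sigma> * ((y - c) \<bullet> i) + t"
      using i sg by (auto simp: v_def inner_add_left inner_diff_left algebra_simps)
    ultimately show False
      using sg t by (auto simp: abs_le_iff)
  qed
  moreover have "(+) v ` T - T \<subseteq> {x\<in>B. f x \<in> {s..<s + L * t}}"
    unfolding T_def v_def B_def using i sg w t Lip high
    by (intro shifted_sublevel_diff_subset_slab) (auto simp: B_def)
  ultimately have "measure lebesgue E \<le> measure lebesgue {x\<in>B. f x \<in> {s..<s + L * t}}"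
    by (intro measure_le_translate_diff[OF T E(1) S ET])
  then show ?thesis
    using E(2) by simp
qed

lemma line_increment_ge:
  fixes f :: "'a::real_normed_vector \<Rightarrow> real"
  assumes der: "\<forall>x. (f has_derivative Df x) (at x)" and ab: "a \<le> b"
    and bound: "\<And>t. a \<le> t \<Longrightarrow> t \<le> b \<Longrightarrow> p \<le> Df (y + t *\<^sub>R u) u"
  shows "p * (b - a) \<le> f (y + b *\<^sub>R u) - f (y + a *\<^sub>R u)"
proof -
  define g where "g t = f (y + t *\<^sub>R u) - p * t" for t
  have "g a \<le> g b"
  proof (rule DERIV_nonneg_imp_nondecreasing[OF ab])
    fix t
    assume t: "a \<le> t" "t \<le> b"
    have lin: "linear (Df (y + t *\<^sub>R u))"
      using der has_derivative_linear by blast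
    have "((\<lambda>t. y + t *\<^sub>R u) has_derivative (\<lambda>h. h *\<^sub>R u)) (at t)"
      by (auto intro!: derivative_eq_intros)
    then have "((\<lambda>t. f (y + t *\<^sub>R u)) has_derivative (\<lambda>h. Df (y + t *\<^sub>R u) (h *\<^sub>R u))) (at t)"
      using has_derivative_compose der by blast
    moreover have "(\<lambda>h. Df (y + t *\<^sub>R u) (h *\<^sub>R u)) = (*) (Df (y + t *\<^sub>R u) u)"
      using linear_scale[OF lin] by (auto simp: fun_eq_iff)
    ultimately have "((\<lambda>t. f (y + t *\<^sub>R u)) has_field_derivative Df (y + t *\<^sub>R u) u) (at t)"
      by (simp add: has_field_derivative_def)
    then have "(g has_field_derivative Df (y + t *\<^sub>R u) u - p) (at t)"
      unfolding g_def by (auto intro!: derivative_eq_intros)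
    then show "\<exists>D. (g has_real_derivative D) (at t) \<and> 0 \<le> D"
      using bound[OF t] by auto
  qed
  then show ?thesis
    by (simp add: g_def algebra_simps)
qed

lemma box_line_increment:
  fixes f :: "'a::euclidean_space \<Rightarrow> real" and c w :: 'a
  defines "B \<equiv> cbox (c - w) (c + w)"
  assumes der: "\<forall>x. (f has_derivative Df x) (at x)"
    and i: "i \<in> Basis" and sg: "\<sigma> = 1 \<or> \<sigma> = -1"
    and w: "\<forall>j\<in>Basis. w \<bullet> j = (if j = i then r else r')"
    and mono: "\<And>z. z \<in> B \<Longrightarrow> p \<le> \<sigma> * Df z i" and x: "x \<in> B"
  shows "0 \<le> \<sigma> * ((x - c) \<bullet> i) \<Longrightarrow>
           p * (\<sigma> * ((x - c) \<bullet> i)) \<le> f x - f (x - ((x - c) \<bullet> i) *\<^sub>R i)"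
    and "\<sigma> * ((x - c) \<bullet> i) \<le> 0 \<Longrightarrow>
           f x - f (x - ((x - c) \<bullet> i) *\<^sub>R i) \<le> p * (\<sigma> * ((x - c) \<bullet> i))"
proof -
  define y where "y = x - ((x - c) \<bullet> i) *\<^sub>R i"
  define u where "u = \<sigma> *\<^sub>R i"
  define b where "b = \<sigma> * ((x - c) \<bullet> i)"
  have abs_\<sigma>: "\<bar>\<sigma> * a\<bar> = \<bar>a\<bar>" for a
    using sg by auto
  have memB: "z \<in> B \<longleftrightarrow> (\<forall>j\<in>Basis. \<bar>(z - c) \<bullet> j\<bar> \<le> w \<bullet> j)" for z
    unfolding B_def by (rule mem_cbox_centered)
  have x_eq: "y + b *\<^sub>R u = x" "y + 0 *\<^sub>R u = y"
    using sg by (auto simp: y_def b_def u_def)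
  have b: "\<bar>b\<bar> \<le> r"
    using x i w abs_\<sigma> by (auto simp: memB b_def)
  have line: "p \<le> Df (y + t *\<^sub>R u) u" if "\<bar>t\<bar> \<le> r" for t
  proof -
    have "(y + t *\<^sub>R u - c) \<bullet> j = (if j = i then \<sigma> * t else (x - c) \<bullet> j)" if "j \<in> Basis" for j
      using that i by (auto simp: y_def u_def inner_diff_left inner_add_left inner_Basis)
    then have "y + t *\<^sub>R u \<in> B"
      using \<open>\<bar>t\<bar> \<le> r\<close> x w abs_\<sigma> by (auto simp: memB)
    moreover have "Df (y + t *\<^sub>R u) u = \<sigma> * Df (y + t *\<^sub>R u) i"
      using linear_scale[OF has_derivative_linear[OF der[rule_format]]] by (simp add: u_def)
    ultimately show ?thesis
      using mono by simp
  qed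
  show "p * (\<sigma> * ((x - c) \<bullet> i)) \<le> f x - f (x - ((x - c) \<bullet> i) *\<^sub>R i)"
    if "0 \<le> \<sigma> * ((x - c) \<bullet> i)"
    using line_increment_ge[OF der, of 0 b p y u] that b line x_eq by (simp add: b_def y_def)
  show "f x - f (x - ((x - c) \<bullet> i) *\<^sub>R i) \<le> p * (\<sigma> * ((x - c) \<bullet> i))"
    if "\<sigma> * ((x - c) \<bullet> i) \<le> 0"
    using line_increment_ge[OF der, of b 0 p y u] that b line x_eq by (simp add: b_def y_def)
qed

lemma box_level_separation:
  fixes f :: "'a::euclidean_space \<Rightarrow> real" and c w :: 'a
  defines "B \<equiv> cbox (c - w) (c + w)"
  assumes der: "\<forall>x. (f has_derivative Df x) (at x)"
    and Lip: "\<forall>x y. \<bar>f x - f y\<bar> \<le> L * norm (x - y)" and L: "0 \<le> L"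
    and i: "i \<in> Basis" and sg: "\<sigma> = 1 \<or> \<sigma> = -1"
    and w: "\<forall>j\<in>Basis. w \<bullet> j = (if j = i then r else r')" and r': "0 \<le> r'"
    and mono: "\<And>z. z \<in> B \<Longrightarrow> p \<le> \<sigma> * Df z i" and p: "0 \<le> p"
    and flat: "L * DIM('a) * r' \<le> p * r / 4"
    and x: "x \<in> B"
  shows "r / 2 \<le> \<sigma> * ((x - c) \<bullet> i) \<Longrightarrow> f c + p * r / 4 \<le> f x"
    and "\<sigma> * ((x - c) \<bullet> i) \<le> - r / 2 \<Longrightarrow> f x \<le> f c - p * r / 4"
proof -
  let ?y = "x - ((x - c) \<bullet> i) *\<^sub>R i"
  note incr = box_line_increment[where c = c, OF der i sg w mono[unfolded B_def] x[unfolded B_def]]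
  have "norm (?y - c) \<le> DIM('a) * r'"
    using x i w r' unfolding B_def mem_cbox_centered
    by (intro norm_le_DIM_mult) (auto simp: inner_diff_left inner_Basis)
  then have "L * norm (?y - c) \<le> L * (DIM('a) * r')"
    using L by (rule mult_left_mono)
  then have fy: "f c - p * r / 4 \<le> f ?y" "f ?y \<le> f c + p * r / 4"
    using Lip[rule_format, of ?y c] flat by (simp_all add: abs_le_iff)
  have "\<bar>(x - c) \<bullet> i\<bar> \<le> r"
    using x i w unfolding B_def mem_cbox_centered by force
  then have "0 \<le> r"
    using abs_ge_zero[of "(x - c) \<bullet> i"] by linarith
  show "f c + p * r / 4 \<le> f x" if "r / 2 \<le> \<sigma> * ((x - c) \<bullet> i)"
  proof -
    have "p * (r / 2) \<le> p * (\<sigma> * ((x - c) \<bullet> i))"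
      using that p by (rule mult_left_mono)
    moreover have "0 \<le> \<sigma> * ((x - c) \<bullet> i)"
      using that \<open>0 \<le> r\<close> by linarith
    then have "p * (\<sigma> * ((x - c) \<bullet> i)) \<le> f x - f ?y"
      using incr(1) by blast
    ultimately show ?thesis
      using fy by linarith
  qed
  show "f x \<le> f c - p * r / 4" if "\<sigma> * ((x - c) \<bullet> i) \<le> - r / 2"
  proof -
    have "p * (\<sigma> * ((x - c) \<bullet> i)) \<le> p * (- r / 2)"
      using that p by (rule mult_left_mono)
    moreover have "\<sigma> * ((x - c) \<bullet> i) \<le> 0"
      using that \<open>0 \<le> r\<close> by linarith
    then have "f x - f ?y \<le> p * (\<sigma> * ((x - c) \<bullet> i))"
      using incr(2) by blast
    ultimately show ?thesis
      using fy by linarith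
  qed
qed

lemma box_slab_growth:
  fixes f :: "'a::euclidean_space \<Rightarrow> real" and c w :: 'a
  defines "B \<equiv> cbox (c - w) (c + w)"
  assumes der: "\<forall>x. (f has_derivative Df x) (at x)"
    and Lip: "\<forall>x y. \<bar>f x - f y\<bar> \<le> L * norm (x - y)" and L: "0 < L"
    and i: "i \<in> Basis" and sg: "\<sigma> = 1 \<or> \<sigma> = -1"
    and w: "\<forall>j\<in>Basis. w \<bullet> j = (if j = i then r else r')" and r: "0 < r" and r': "0 \<le> r'"
    and mono: "\<And>z. z \<in> B \<Longrightarrow> p \<le> \<sigma> * Df z i" and p: "0 < p"
    and flat: "L * DIM('a) * r' \<le> p * r / 4"
  shows "slab_growth f B (f c) (min (p * r / 8) (L * r / 2)) ((2 * r') ^ (DIM('a) - 1) / (2 * L))"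
  unfolding slab_growth_def
proof (intro conjI allI impI)
  show "B \<in> sets lborel" "bounded B"
    by (simp_all add: B_def)
  have f: "continuous_on UNIV f"
    using der by (meson continuous_at_imp_continuous_on has_derivative_continuous)
  note sep = box_level_separation[where c = c, OF der Lip less_imp_le[OF L] i sg w r'
      mono[unfolded B_def] less_imp_le[OF p] flat, folded B_def]
  fix s k
  assume s: "\<bar>s - f c\<bar> \<le> min (p * r / 8) (L * r / 2)" and k: "0 < k" "k \<le> min (p * r / 8) (L * r / 2)"
  have pr: "0 < p * r"
    using p r by simp
  have "\<bar>s - f c\<bar> \<le> p * r / 8"
    using s by simp
  then have s_gap: "f c - p * r / 8 \<le> s" "s \<le> f c + p * r / 8"
    using abs_le_D1 abs_le_D2 by fastforce+
  have "k / L / 2 * (2 * r') ^ (DIM('a) - 1) \<le> measure lebesgue {x\<in>B. f x \<in> {s..<s + L * (k / L)}}"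
    unfolding B_def
  proof (rule box_slab_measure_ge[OF i sg w r' _ _ f Lip])
    show "0 < k / L" "k / L \<le> r / 2"
      using k L by (auto simp: field_simps)
    show "f x < s" if "x \<in> cbox (c - w) (c + w)" "\<sigma> * ((x - c) \<bullet> i) \<le> - r / 2" for x
      using sep(2)[of x] that pr s_gap by (simp add: B_def)
    show "s \<le> f x" if "x \<in> cbox (c - w) (c + w)" "r / 2 \<le> \<sigma> * ((x - c) \<bullet> i)" for x
      using sep(1)[of x] that pr s_gap by (simp add: B_def)
  qed
  moreover have "{x\<in>B. f x \<in> {s..<s + k}} \<in> sets lborel"
    unfolding B_def by (rule sets_lborel_cbox_preimage[OF f]) simp
  ultimately show "(2 * r') ^ (DIM('a) - 1) / (2 * L) * k \<le> measure lborel {x\<in>B. f x \<in> {s..<s + k}}"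
    using L by (simp add: measure_completion field_simps)
qed

lemma slab_growth_near_regular_point:
  fixes f :: "'a::euclidean_space \<Rightarrow> real"
  assumes der: "\<forall>x. (f has_derivative Df x) (at x)"
    and L: "0 < L" and Lip: "\<forall>x y. \<bar>f x - f y\<bar> \<le> L * norm (x - y)"
    and i: "i \<in> Basis" and reg: "Df x0 i \<noteq> 0" and cont: "isCont (\<lambda>x. Df x i) x0"
  obtains B \<eta> \<kappa> where "0 < \<eta>" "0 < \<kappa>" "slab_growth f B (f x0) \<eta> \<kappa>"
proof -
  define q where "q = \<bar>Df x0 i\<bar>"
  obtain \<sigma> \<rho> where sg: "\<sigma> = 1 \<or> \<sigma> = -1" and \<rho>: "0 < \<rho>"
    and mono: "\<And>z. dist z x0 < \<rho> \<Longrightarrow> q / 2 \<le> \<sigma> * Df z i"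
    unfolding q_def using isCont_sign_bounded_away[OF cont reg] by blast
  define d where "d = real DIM('a)"
  define r where "r = \<rho> / (2 * d)"
  define r' where "r' = min r (q * r / (8 * L * d))"
  define w where "w = (\<Sum>j\<in>Basis. (if j = i then r else r') *\<^sub>R j)"
  have q: "0 < q" and d: "0 < d"
    using reg by (simp_all add: q_def d_def)
  have r: "0 < r" "0 < r'" "r' \<le> r"
    using \<rho> d q L by (auto simp: r_def r'_def)
  have w: "\<forall>j\<in>Basis. w \<bullet> j = (if j = i then r else r')"
    by (simp add: w_def)
  have "L * d * r' \<le> L * d * (q * r / (8 * L * d))"
    using L d by (intro mult_left_mono) (auto simp: r'_def)
  also have "\<dots> = q / 2 * r / 4"
    using L d by (simp add: field_simps)
  finally have flat: "L * DIM('a) * r' \<le> q / 2 * r / 4"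
    by (simp only: d_def)
  have near: "dist z x0 < \<rho>" if "z \<in> cbox (x0 - w) (x0 + w)" for z
    using that w r \<rho> d by (intro dist_less_of_mem_cbox_centered[of _ _ _ r]) (auto simp: r_def d_def)
  have "slab_growth f (cbox (x0 - w) (x0 + w)) (f x0) (min (q / 2 * r / 8) (L * r / 2))
      ((2 * r') ^ (DIM('a) - 1) / (2 * L))"
    by (rule box_slab_growth[OF der Lip L i sg w r(1) less_imp_le[OF r(2)] _ _ flat])
      (use mono near q in auto)
  moreover have "0 < min (q / 2 * r / 8) (L * r / 2)" "0 < (2 * r') ^ (DIM('a) - 1) / (2 * L)"
    using q r L by simp_all
  ultimately show ?thesis
    using that by blast
qed

lemma partial_neq_0_of_grad_neq_0:
  fixes f :: "'a::euclidean_space \<Rightarrow> real"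
  assumes der: "(f has_derivative D) (at x)" and "grad f x \<noteq> 0"
  obtains i where "i \<in> Basis" "D i \<noteq> 0"
proof -
  have "grad f x = (\<Sum>i\<in>Basis. D i *\<^sub>R i)"
    unfolding grad_def using frechet_derivative_at[OF der] by simp
  with assms(2) that show ?thesis
    by (metis (no_types, lifting) scale_zero_left sum.neutral)
qed

lemma pos_of_nonneg_noncritical:
  fixes f :: "'a::real_normed_vector \<Rightarrow> real"
  assumes nonneg: "\<forall>y. 0 \<le> f y" and der: "(f has_derivative D) (at x)" and "D v \<noteq> 0"
  shows "0 < f x"
proof (rule ccontr)
  assume "\<not> 0 < f x"
  with nonneg have "\<forall>y\<in>UNIV. f x \<le> f y"
    by (metis order_trans not_less)
  then have "D = (\<lambda>v. 0)"
    using differential_zero_maxmin[of x UNIV f D] der by auto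
  with \<open>D v \<noteq> 0\<close> show False
    by simp
qed

theorem lemmaA1:
  fixes f0 :: "'a::euclidean_space \<Rightarrow> real" and \<tau> :: real
  assumes dim: "DIM('a) \<ge> 2"
    and tau: "0 < \<tau>" "\<tau> < 1"
    and dens0: "prob_density f0"
    and bdd0: "bounded (range f0)"
    and C2: "C2_bounded f0"
    and Ua: "\<exists>a>0. (\<exists>c>0. \<forall>x\<in>{x. level_tau \<tau> f0 - a \<le> f0 x \<and> f0 x \<le> level_tau \<tau> f0 + a}.
                   c \<le> norm (grad f0 x))
               \<and> (\<exists>\<delta>>0. {x. level_tau \<tau> f0 - a \<le> f0 x \<and> f0 x \<le> level_tau \<tau> f0 + a}
                          \<subseteq> enlarge (beta_set \<tau> f0) \<delta>)"
    and cpt: "compact (beta_set \<tau> f0)"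
  shows "\<exists>C1\<ge>1. \<exists>\<epsilon>0>0. \<forall>\<epsilon>. 0 < \<epsilon> \<and> \<epsilon> < \<epsilon>0 \<longrightarrow>
           (\<forall>ft :: 'a \<Rightarrow> real. prob_density ft \<and> uniformly_continuous_on UNIV ft
              \<and> (\<forall>x. \<bar>ft x - f0 x\<bar> \<le> \<epsilon>)
              \<longrightarrow> \<bar>level_tau \<tau> ft - level_tau \<tau> f0\<bar> \<le> C1 * \<epsilon>)"
proof -
  obtain Df where der: "\<forall>x. (f0 has_derivative Df x) (at x)"
    and Df: "\<forall>i\<in>Basis. continuous_on UNIV (\<lambda>x. Df x i) \<and> bounded (range (\<lambda>x. Df x i))"
    using C2 unfolding C2_bounded_def by blast
  have cont0: "continuous_on UNIV f0"
    using der by (meson continuous_at_imp_continuous_on has_derivative_continuous)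
  obtain L where L: "0 < L" "\<forall>x y. \<bar>f0 x - f0 y\<bar> \<le> L * norm (x - y)"
    using lipschitz_of_bounded_partials[OF der] Df by blast
  have ne: "\<exists>y\<ge>0. upper_mass f0 y \<le> 1 - \<tau>"
    using bdd0 tau by (intro ex_upper_mass_le_of_bounded) auto
  obtain x0 where x0: "f0 x0 = level_tau \<tau> f0" and "grad f0 x0 \<noteq> 0"
    by (rule beta_set_regular_point[OF dens0 cont0 bdd0 tau Ua])
  then obtain i where i: "i \<in> Basis" "Df x0 i \<noteq> 0"
    using partial_neq_0_of_grad_neq_0 der by blast
  have c_pos: "0 < level_tau \<tau> f0"
    using pos_of_nonneg_noncritical[of f0 "Df x0" x0 i] dens0 der i x0 by (simp add: prob_density_def)
  have "isCont (\<lambda>x. Df x i) x0"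
    using Df i by (simp add: continuous_on_eq_continuous_at)
  then obtain B \<eta> \<kappa> where \<eta>: "0 < \<eta>" and \<kappa>: "0 < \<kappa>"
    and slab: "slab_growth f0 B (level_tau \<tau> f0) \<eta> \<kappa>"
    using slab_growth_near_regular_point[OF der L i] x0 by metis
  have "\<exists>C\<ge>1. \<exists>\<epsilon>0>0. \<forall>\<epsilon>. 0 < \<epsilon> \<and> \<epsilon> < \<epsilon>0 \<longrightarrow>
      (\<forall>ft. prob_density ft \<and> (\<forall>x. \<bar>ft x - f0 x\<bar> \<le> \<epsilon>) \<longrightarrow> \<bar>level_tau \<tau> ft - level_tau \<tau> f0\<bar> \<le> C * \<epsilon>)"
    by (rule level_tau_stable[OF dens0 ne slab c_pos \<kappa> \<eta>])
  then show ?thesis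
    by blast
qed

end
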